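(* Let $n\ge 2$ be an integer and let $\mathbb{K}$ be a field such that $\operatorname{char}\mathbb{K}$ is either $0$ or coprime to both $n$ and $n-1$. Let $A_n=\mathbb{K}[x,y]/I_n$, where $I_n=(y^{2n+3},\; x^ny^2-y^{n+2},\; x^{2n+1}-xy^{n+1})$, and let $\mathfrak{m}_n$ be the ideal of $A_n$ generated by (the images of) $x,y$. Then the one-dimensional subspace $\langle y^{2n+1}\rangle\subseteq\mathfrak{m}_n$ is invariant under the automorphism group $\operatorname{Aut}(A_n)$ of the $\mathbb{K}$-algebra $A_n$. More precisely, for every $a\in\operatorname{Aut}(A_n)$ there is a scalar $\gamma_a\in\mathbb{K}$ with $a(y^{2n+1})=\gamma_a y^{2n+1}$, and $\gamma_a^{(n-1)/3}=1$ if $n\equiv 1 \pmod 3$, while $\gamma_a^{\,n-1}=1$ otherwise.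
   Context: All algebras are associative, commutative, with unity; $\operatorname{Aut}(A_n)$ denotes the group of unital $\mathbb{K}$-algebra automorphisms of $A_n$. Monomials such as $y^{2n+1}$ are regarded as elements of $A_n$ via the quotient map. (The paper shows $A_n$ is a finite-dimensional local algebra with maximal ideal $\mathfrak{m}_n$.) *)

theory Defs
  imports "HOL-Computational_Algebra.Polynomial"
begin

text \<open>Bivariate polynomials K[x,y] are represented as K[x][y], i.e. the type
  ('a poly) poly: outer variable y, coefficients in K[x].\<close>

definition var_x :: "'a::comm_ring_1 poly poly" where
  "var_x = [:[:0, 1:]:]"

definition var_y :: "'a::comm_ring_1 poly poly" where
  "var_y = [:0, 1:]"

definition const2 :: "'a::comm_ring_1 \<Rightarrow> 'a poly poly" where
  "const2 c = [:[:c:]:]"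

definition I_n :: "nat \<Rightarrow> 'a::comm_ring_1 poly poly set" where
  "I_n n = {g1 * var_y ^ (2*n+3)
            + g2 * (var_x ^ n * var_y ^ 2 - var_y ^ (n+2))
            + g3 * (var_x ^ (2*n+1) - var_x * var_y ^ (n+1)) | g1 g2 g3. True}"

definition cong_A :: "nat \<Rightarrow> 'a::comm_ring_1 poly poly \<Rightarrow> 'a poly poly \<Rightarrow> bool" where
  "cong_A n p q \<longleftrightarrow> p - q \<in> I_n n"

definition is_aut_A :: "nat \<Rightarrow> ('a::field poly poly \<Rightarrow> 'a poly poly) \<Rightarrow> bool" where
  "is_aut_A n \<phi> \<longleftrightarrow>
     (\<forall>p q. cong_A n p q \<longrightarrow> cong_A n (\<phi> p) (\<phi> q)) \<and>
     (\<forall>p q. cong_A n (\<phi> (p + q)) (\<phi> p + \<phi> q)) \<and>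
     (\<forall>p q. cong_A n (\<phi> (p * q)) (\<phi> p * \<phi> q)) \<and>
     (\<forall>c p. cong_A n (\<phi> (const2 c * p)) (const2 c * \<phi> p)) \<and>
     cong_A n (\<phi> 1) 1 \<and>
     (\<forall>p q. cong_A n (\<phi> p) (\<phi> q) \<longrightarrow> cong_A n p q) \<and>
     (\<forall>q. \<exists>p. cong_A n (\<phi> p) q)"

end

theory Submission
  imports Defs
begin

text \<open>
  Let f and g represent the images of x and y under an automorphism of A_n; they satisfy
  f^n g^2 = g^(n+2) and f^(2n+1) = f g^(n+1) in A_n. Single coefficients are not
  well defined on A_n, but the sum of the coefficients over a set S of monomials is, as soon as
  S is saturated under the binomial relations x^(i+n) y^(j+2) ~ x^i y^(j+n+2) and
  x^(i+2n+1) y^j ~ x^(i+1) y^(j+n+1) and avoids the multiples of y^(2n+3). Comparing such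
  sums on both sides of the two relations, with f and g expanded up to order two, shows
  f = a x + ..., g = d y + ... with a^n = d and d^(n-1) = 1, and that g has neither an x^2
  nor a y^2 term; the last two facts need 2, n and n - 1 to be invertible in the field.
  Then all terms of the binomial expansion of g^(2n+1) = (d y + (g - d y))^(2n+1) except
  (d y)^(2n+1) lie in I_n, so y^(2n+1) is multiplied by d^(2n+1) = d^3.
\<close>

definition coeff2 :: "'a::zero poly poly \<Rightarrow> nat \<Rightarrow> nat \<Rightarrow> 'a" where
  "coeff2 p i j = coeff (coeff p j) i"

definition monom2 :: "'a::zero \<Rightarrow> nat \<Rightarrow> nat \<Rightarrow> 'a poly poly" where
  "monom2 c i j = monom (monom c i) j"

lemma coeff2_0 [simp]: "coeff2 0 i j = 0"
  by (simp add: coeff2_def)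

lemma coeff2_add [simp]: "coeff2 (p + q) i j = coeff2 p i j + coeff2 q i j"
  by (simp add: coeff2_def)

lemma coeff2_diff [simp]: "coeff2 (p - q) i j = coeff2 p i j - coeff2 q i j"
  by (simp add: coeff2_def)

lemma coeff2_monom2: "coeff2 (monom2 c i j) i' j' = (if i' = i \<and> j' = j then c else 0)"
  by (simp add: coeff2_def monom2_def coeff_monom)

lemma coeff2_monom2_mult:
  "coeff2 (monom2 c i j * p) i' j' = (if i \<le> i' \<and> j \<le> j' then c * coeff2 p (i' - i) (j' - j) else 0)"
  by (simp add: coeff2_def monom2_def coeff_monom_mult)

lemma coeff2_mult_monom2:
  "coeff2 (p * monom2 c i j) i' j' = (if i \<le> i' \<and> j \<le> j' then c * coeff2 p (i' - i) (j' - j) else 0)"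
  by (simp add: mult.commute[of p] coeff2_monom2_mult)

lemma coeff2_mult: "coeff2 (p * q) i j = (\<Sum>l\<le>j. \<Sum>m\<le>i. coeff2 p m l * coeff2 q (i - m) (j - l))"
  by (simp add: coeff2_def coeff_mult coeff_sum)

lemma coeff2_mult_0_0: "coeff2 (p * q) 0 0 = coeff2 p 0 0 * coeff2 q 0 0"
  by (simp add: coeff2_mult)

lemma coeff2_power_0_0: "coeff2 (p ^ k) 0 0 = coeff2 p 0 0 ^ k"
proof (induction k)
  case 0
  then show ?case by (simp add: coeff2_def)
qed (simp add: coeff2_mult_0_0)

lemma coeff2_mult_1_0: "coeff2 (p * q) 1 0 = coeff2 p 0 0 * coeff2 q 1 0 + coeff2 p 1 0 * coeff2 q 0 0"
  by (simp add: coeff2_mult)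

lemma coeff2_mult_0_1: "coeff2 (p * q) 0 1 = coeff2 p 0 0 * coeff2 q 0 1 + coeff2 p 0 1 * coeff2 q 0 0"
  by (simp add: coeff2_mult)

lemma monom2_0 [simp]: "monom2 0 i j = 0"
  by (simp add: monom2_def)

lemma monom2_mult: "monom2 a i j * monom2 b k l = monom2 (a * b) (i + k) (j + l)"
  by (simp add: monom2_def mult_monom)

lemma monom2_power: "monom2 a i j ^ k = monom2 (a ^ k) (i * k) (j * k)"
  by (simp add: monom2_def monom_power)

lemma var_x_eq_monom2: "var_x = monom2 1 1 0"
  by (simp add: var_x_def monom2_def monom_0 monom_Suc)

lemma var_y_eq_monom2: "var_y = monom2 1 0 1"
  by (simp add: var_y_def monom2_def monom_0 monom_Suc)

lemma var_x_power_eq_monom2: "var_x ^ i = monom2 1 i 0"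
  by (simp add: var_x_eq_monom2 monom2_power)

lemma var_y_power_eq_monom2: "var_y ^ j = monom2 1 0 j"
  by (simp add: var_y_eq_monom2 monom2_power)

lemma var_x_power_mult_var_y_power: "var_x ^ i * var_y ^ j = monom2 1 i j"
  by (simp add: var_x_power_eq_monom2 var_y_power_eq_monom2 monom2_mult)

lemma const2_eq_monom2: "const2 c = monom2 c 0 0"
  by (simp add: const2_def monom2_def monom_0)

lemma of_nat_eq_monom2: "(of_nat m :: 'a::comm_ring_1 poly poly) = monom2 (of_nat m) 0 0"
  by (simp add: monom2_def of_nat_poly monom_0)

lemma poly2_as_sum_of_monom2:
  "p = (\<Sum>j\<le>degree p. \<Sum>i\<le>degree (coeff p j). monom2 (coeff2 p i j) i j)"
proof -
  have "p = (\<Sum>j\<le>degree p. monom (coeff p j) j)"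
    by (simp add: poly_as_sum_of_monoms)
  also have "\<dots> = (\<Sum>j\<le>degree p. monom (\<Sum>i\<le>degree (coeff p j). monom (coeff (coeff p j) i) i) j)"
    by (simp add: poly_as_sum_of_monoms)
  finally show ?thesis
    by (simp add: monom_sum monom2_def coeff2_def)
qed

definition worder_ge :: "nat \<Rightarrow> nat \<Rightarrow> nat \<Rightarrow> 'a::zero poly poly \<Rightarrow> bool" where
  "worder_ge w1 w2 k p \<longleftrightarrow> (\<forall>i j. w1 * i + w2 * j < k \<longrightarrow> coeff2 p i j = 0)"

abbreviation order_ge :: "nat \<Rightarrow> 'a::zero poly poly \<Rightarrow> bool" where
  "order_ge \<equiv> worder_ge 1 1"

lemma worder_ge_coeff2: "worder_ge w1 w2 k p \<Longrightarrow> w1 * i + w2 * j < k \<Longrightarrow> coeff2 p i j = 0"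
  by (simp add: worder_ge_def)

lemma worder_ge_coeff2_nonzero: "worder_ge w1 w2 k p \<Longrightarrow> coeff2 p i j \<noteq> 0 \<Longrightarrow> k \<le> w1 * i + w2 * j"
  by (meson not_le worder_ge_coeff2)

lemma worder_ge_0 [simp]: "worder_ge w1 w2 0 p"
  by (simp add: worder_ge_def)

lemma worder_ge_zero [simp]: "worder_ge w1 w2 k 0"
  by (simp add: worder_ge_def)

lemma worder_ge_add: "worder_ge w1 w2 k p \<Longrightarrow> worder_ge w1 w2 k q \<Longrightarrow> worder_ge w1 w2 k (p + q)"
  by (simp add: worder_ge_def)

lemma worder_ge_mono: "worder_ge w1 w2 k p \<Longrightarrow> k' \<le> k \<Longrightarrow> worder_ge w1 w2 k' p"
  by (simp add: worder_ge_def)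

lemma worder_ge_monom2: "k \<le> w1 * i + w2 * j \<Longrightarrow> worder_ge w1 w2 k (monom2 c i j)"
  by (simp add: worder_ge_def coeff2_monom2)

lemma worder_ge_mult:
  assumes p: "worder_ge w1 w2 a p" and q: "worder_ge w1 w2 b q"
  shows "worder_ge w1 w2 (a + b) (p * q)"
  unfolding worder_ge_def
proof (intro allI impI)
  fix i j assume ij: "w1 * i + w2 * j < a + b"
  have "coeff2 p m l * coeff2 q (i - m) (j - l) = 0" if "l \<le> j" "m \<le> i" for l m
  proof (cases "w1 * m + w2 * l < a")
    case True
    then show ?thesis using p by (simp add: worder_ge_coeff2)
  next
    case False
    have "w1 * m \<le> w1 * i" "w2 * l \<le> w2 * j" using that by simp_all
    then have "w1 * (i - m) + w2 * (j - l) < b"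
      using ij False by (simp only: diff_mult_distrib2)
    then show ?thesis using q by (simp add: worder_ge_coeff2)
  qed
  then show "coeff2 (p * q) i j = 0" by (simp add: coeff2_mult)
qed

lemma worder_ge_mult_left: "worder_ge w1 w2 b q \<Longrightarrow> worder_ge w1 w2 b (p * q)"
  using worder_ge_mult[of w1 w2 0 p b q] by simp

lemma worder_ge_power: "worder_ge w1 w2 a p \<Longrightarrow> worder_ge w1 w2 (m * a) (p ^ m)"
proof (induction m)
  case (Suc m)
  then show ?case using worder_ge_mult[of w1 w2 a p "m * a" "p ^ m"] by simp
qed simp

lemma order_ge_1_iff: "order_ge 1 p \<longleftrightarrow> coeff2 p 0 0 = 0"
  by (simp add: worder_ge_def)

definition agree_below :: "nat \<Rightarrow> 'a::ab_group_add poly poly \<Rightarrow> 'a poly poly \<Rightarrow> bool" where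
  "agree_below k p q \<longleftrightarrow> order_ge k (p - q)"

lemma agree_below_refl [simp]: "agree_below k p p"
  by (simp add: agree_below_def)

lemma agree_below_coeff2: "agree_below k p q \<Longrightarrow> i + j < k \<Longrightarrow> coeff2 p i j = coeff2 q i j"
  unfolding agree_below_def worder_ge_def by auto

lemma agree_below_mult:
  fixes p :: "'a::comm_ring_1 poly poly"
  assumes p: "agree_below (a + 1) p p'" "order_ge a p'"
    and q: "agree_below (b + 1) q q'" "order_ge b q'"
  shows "agree_below (a + b + 1) (p * q) (p' * q')"
proof -
  have "order_ge b (q - q')"
    using q(1) worder_ge_mono unfolding agree_below_def by fastforce
  then have "order_ge b q"
    using worder_ge_add[OF _ q(2)] by fastforce
  then have "order_ge (a + b + 1) ((p - p') * q)"
    using worder_ge_mult[of 1 1 "a + 1" "p - p'" b q] p(1) unfolding agree_below_def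
    by (simp add: add_ac)
  moreover have "order_ge (a + b + 1) (p' * (q - q'))"
    using worder_ge_mult[OF p(2), of "b + 1"] q(1) unfolding agree_below_def
    by (simp add: add_ac)
  moreover have "p * q - p' * q' = (p - p') * q + p' * (q - q')"
    by (simp add: algebra_simps)
  ultimately show ?thesis
    unfolding agree_below_def by (simp add: worder_ge_add)
qed

lemma agree_below_power:
  fixes p :: "'a::comm_ring_1 poly poly"
  assumes "agree_below (a + 1) p p'" "order_ge a p'"
  shows "agree_below (m * a + 1) (p ^ m) (p' ^ m)"
proof (induction m)
  case (Suc m)
  have "agree_below (a + m * a + 1) (p * p ^ m) (p' * p' ^ m)"
    by (rule agree_below_mult[OF assms Suc worder_ge_power[OF assms(2)]])
  then show ?case by (simp add: add.assoc)
qed simp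

lemma order_ge_binomial_term:
  fixes u :: "'a::comm_ring_1 poly poly"
  assumes "order_ge 1 u" "order_ge 2 v"
  shows "order_ge (m + 1) (of_nat m * (u ^ (m - 1) * v))"
proof (cases m)
  case (Suc k)
  have "order_ge (k * 1 + 2) (u ^ k * v)"
    by (intro worder_ge_mult worder_ge_power assms)
  then show ?thesis
    using Suc by (simp add: worder_ge_mult_left)
qed simp

lemma agree_below_binomial:
  fixes u :: "'a::comm_ring_1 poly poly"
  assumes u: "order_ge 1 u" and v: "order_ge 2 v"
  shows "agree_below (m + 2) ((u + v) ^ m) (u ^ m + of_nat m * (u ^ (m - 1) * v))"
proof (induction m)
  case (Suc m)
  define E where "E = (u + v) ^ m - (u ^ m + of_nat m * (u ^ (m - 1) * v))"
  have E: "order_ge (m + 2) E" using Suc unfolding agree_below_def E_def .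
  have "(u + v) ^ Suc m - (u ^ Suc m + of_nat (Suc m) * (u ^ m * v))
     = u * E + v * E + of_nat m * (u ^ (m - 1) * v * v)"
    unfolding E_def by (cases m) (simp_all add: algebra_simps)
  moreover have "order_ge (Suc m + 2) (u * E)"
    using worder_ge_mult[OF u E] by simp
  moreover have "order_ge (Suc m + 2) (v * E)"
    using worder_ge_mult[OF v E] worder_ge_mono by fastforce
  moreover have "order_ge (Suc m + 2) (of_nat m * (u ^ (m - 1) * v * v))"
    using worder_ge_mult[OF order_ge_binomial_term[OF u v, of m] v] by (simp add: mult.assoc)
  ultimately show ?case
    unfolding agree_below_def by (simp add: worder_ge_add)
qed simp

lemma agree_below_mult2:
  fixes P :: "'a::comm_ring_1 poly poly"
  assumes P: "agree_below (a + 2) P (P0 + P1)" "order_ge a P0" "order_ge (a + 1) P1"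
    and Q: "agree_below (b + 2) Q (Q0 + Q1)" "order_ge b Q0" "order_ge (b + 1) Q1"
  shows "agree_below (a + b + 2) (P * Q) (P0 * Q0 + (P0 * Q1 + P1 * Q0))"
proof -
  define EP where "EP = P - (P0 + P1)"
  define EQ where "EQ = Q - (Q0 + Q1)"
  have EP: "order_ge (a + 2) EP" and EQ: "order_ge (b + 2) EQ"
    using P(1) Q(1) unfolding agree_below_def EP_def EQ_def by auto
  have "order_ge b Q"
    using worder_ge_add[OF worder_ge_mono[OF EQ] worder_ge_add[OF Q(2) worder_ge_mono[OF Q(3)]]]
    unfolding EQ_def by simp
  then have "order_ge (a + b + 2) (EP * Q)"
    using worder_ge_mult[OF EP, of b Q] by (simp add: add_ac)
  moreover have "order_ge (a + b + 2) ((P0 + P1) * EQ)"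
    using worder_ge_mult[OF worder_ge_add[OF P(2) worder_ge_mono[OF P(3)]] EQ] by (simp add: add.assoc)
  moreover have "order_ge (a + b + 2) (P1 * Q1)"
    using worder_ge_mult[OF P(3) Q(3)] by simp
  moreover have "P * Q - (P0 * Q0 + (P0 * Q1 + P1 * Q0)) = EP * Q + (P0 + P1) * EQ + P1 * Q1"
    unfolding EP_def EQ_def by (simp add: algebra_simps)
  ultimately show ?thesis
    unfolding agree_below_def by (simp add: worder_ge_add)
qed

lemma agree_below_binomial_mult:
  fixes u :: "'a::comm_ring_1 poly poly"
  assumes u: "order_ge 1 u" "order_ge 2 v" and u': "order_ge 1 u'" "order_ge 2 v'"
  shows "agree_below (k + m + 2) ((u + v) ^ k * (u' + v') ^ m)
    (u ^ k * u' ^ m + (u ^ k * (of_nat m * (u' ^ (m - 1) * v')) + of_nat k * (u ^ (k - 1) * v) * u' ^ m))"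
  using agree_below_mult2[OF agree_below_binomial[OF u] _ order_ge_binomial_term[OF u]
      agree_below_binomial[OF u'] _ order_ge_binomial_term[OF u']]
    worder_ge_power[OF u(1)] worder_ge_power[OF u'(1)]
  by simp

definition linear_part :: "'a::comm_monoid_add poly poly \<Rightarrow> 'a poly poly" where
  "linear_part p = monom2 (coeff2 p 1 0) 1 0 + monom2 (coeff2 p 0 1) 0 1"

lemma order_ge_linear_part: "order_ge 1 (linear_part p)"
  unfolding linear_part_def by (intro worder_ge_add worder_ge_monom2) simp_all

lemma agree_below_linear_part:
  assumes "coeff2 p 0 0 = 0"
  shows "agree_below 2 p (linear_part p)"
  unfolding agree_below_def worder_ge_def
proof (intro allI impI)
  fix i j :: nat assume "1 * i + 1 * j < 2"
  then have "(i, j) = (0, 0) \<or> (i, j) = (1, 0) \<or> (i, j) = (0, 1)" by auto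
  then show "coeff2 (p - linear_part p) i j = 0"
    using assms by (auto simp: linear_part_def coeff2_monom2)
qed

lemma agree_below_linear_part_power_mult:
  fixes p :: "'a::comm_ring_1 poly poly"
  assumes "coeff2 p 0 0 = 0" "coeff2 q 0 0 = 0"
  shows "agree_below (k + m + 1) (p ^ k * q ^ m) (linear_part p ^ k * linear_part q ^ m)"
proof -
  have "agree_below (1 + 1) p (linear_part p)" "agree_below (1 + 1) q (linear_part q)"
    unfolding one_add_one using agree_below_linear_part assms by blast+
  then have "agree_below (k * 1 + 1) (p ^ k) (linear_part p ^ k)"
    and "agree_below (m * 1 + 1) (q ^ m) (linear_part q ^ m)"
    using agree_below_power order_ge_linear_part by blast+
  then show ?thesis
    using agree_below_mult worder_ge_power[OF order_ge_linear_part] by fastforce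
qed

lemma coeff2_linear_part:
  "coeff2 (linear_part p) i j = (if (i, j) = (1, 0) \<or> (i, j) = (0, 1) then coeff2 p i j else 0)"
  by (auto simp: linear_part_def coeff2_monom2)

lemma coeff2_linear_part_power_mult_y0:
  fixes p :: "'a::comm_ring_1 poly poly"
  shows "coeff2 (linear_part p ^ k * linear_part q ^ m) (k + m) 0 = coeff2 p 1 0 ^ k * coeff2 q 1 0 ^ m"
  by (simp add: coeff2_def linear_part_def monom2_def coeff_mult_0 coeff_0_power coeff_monom
      monom_power mult_monom)

lemma I_nI:
  "g1 * var_y ^ (2*n+3) + g2 * (var_x ^ n * var_y ^ 2 - var_y ^ (n+2))
     + g3 * (var_x ^ (2*n+1) - var_x * var_y ^ (n+1)) \<in> I_n n"
  unfolding I_n_def by blast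

lemma I_nE:
  assumes "p \<in> I_n n"
  obtains g1 g2 g3 where "p = g1 * var_y ^ (2*n+3) + g2 * (var_x ^ n * var_y ^ 2 - var_y ^ (n+2))
     + g3 * (var_x ^ (2*n+1) - var_x * var_y ^ (n+1))"
  using assms unfolding I_n_def by blast

lemma I_n_add:
  assumes "p \<in> I_n n" "q \<in> I_n n"
  shows "p + q \<in> I_n n"
proof -
  obtain a1 a2 a3 where p: "p = a1 * var_y ^ (2*n+3) + a2 * (var_x ^ n * var_y ^ 2 - var_y ^ (n+2))
     + a3 * (var_x ^ (2*n+1) - var_x * var_y ^ (n+1))" using assms(1) by (rule I_nE)
  obtain b1 b2 b3 where q: "q = b1 * var_y ^ (2*n+3) + b2 * (var_x ^ n * var_y ^ 2 - var_y ^ (n+2))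
     + b3 * (var_x ^ (2*n+1) - var_x * var_y ^ (n+1))" using assms(2) by (rule I_nE)
  have "p + q = (a1 + b1) * var_y ^ (2*n+3) + (a2 + b2) * (var_x ^ n * var_y ^ 2 - var_y ^ (n+2))
     + (a3 + b3) * (var_x ^ (2*n+1) - var_x * var_y ^ (n+1))"
    unfolding p q by (simp add: algebra_simps)
  then show ?thesis by (simp only: I_nI)
qed

lemma I_n_mult_left:
  assumes "p \<in> I_n n"
  shows "r * p \<in> I_n n"
proof -
  obtain a1 a2 a3 where p: "p = a1 * var_y ^ (2*n+3) + a2 * (var_x ^ n * var_y ^ 2 - var_y ^ (n+2))
     + a3 * (var_x ^ (2*n+1) - var_x * var_y ^ (n+1))" using assms by (rule I_nE)
  have "r * p = (r * a1) * var_y ^ (2*n+3) + (r * a2) * (var_x ^ n * var_y ^ 2 - var_y ^ (n+2))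
     + (r * a3) * (var_x ^ (2*n+1) - var_x * var_y ^ (n+1))"
    unfolding p by (simp add: algebra_simps)
  then show ?thesis by (simp only: I_nI)
qed

lemma I_n_0: "0 \<in> I_n n"
  using I_nI[of 0 n 0 0] by simp

lemma I_n_sum: "(\<And>a. a \<in> A \<Longrightarrow> f a \<in> I_n n) \<Longrightarrow> sum f A \<in> I_n n"
  by (induction A rule: infinite_finite_induct) (auto intro: I_n_add I_n_0)

lemma monom2_y_2n3_in_I_n: "monom2 1 0 (2*n+3) \<in> I_n n"
proof -
  have "var_y ^ (2*n+3) \<in> I_n n"
    using I_nI[of 1 n 0 0] by simp
  then show ?thesis by (simp only: var_y_power_eq_monom2)
qed

lemma monom2_xn_y2_diff_in_I_n: "monom2 1 n 2 - monom2 1 0 (n+2) \<in> I_n n"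
proof -
  have "var_x ^ n * var_y ^ 2 - var_y ^ (n+2) \<in> I_n n"
    using I_nI[of 0 n 1 0] by simp
  then show ?thesis by (simp only: var_x_power_mult_var_y_power, simp only: var_y_power_eq_monom2)
qed

lemma monom2_x2n1_diff_in_I_n: "monom2 1 (2*n+1) 0 - monom2 1 1 (n+1) \<in> I_n n"
proof -
  have "var_x ^ (2*n+1) - var_x ^ 1 * var_y ^ (n+1) \<in> I_n n"
    using I_nI[of 0 n 0 1] by simp
  then show ?thesis by (simp only: var_x_power_mult_var_y_power, simp only: var_x_power_eq_monom2)
qed

lemma cong_A_refl [simp]: "cong_A n p p"
  by (simp add: cong_A_def I_n_0)

lemma cong_A_sym: "cong_A n p q \<Longrightarrow> cong_A n q p"
  unfolding cong_A_def using I_n_mult_left[of "p - q" n "-1"] by simp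

lemma cong_A_trans [trans]: "cong_A n p q \<Longrightarrow> cong_A n q r \<Longrightarrow> cong_A n p r"
  unfolding cong_A_def using I_n_add by fastforce

lemma cong_A_add: "cong_A n p q \<Longrightarrow> cong_A n p' q' \<Longrightarrow> cong_A n (p + p') (q + q')"
  unfolding cong_A_def using I_n_add by (fastforce simp: algebra_simps)

lemma cong_A_mult_left: "cong_A n p q \<Longrightarrow> cong_A n (r * p) (r * q)"
  unfolding cong_A_def using I_n_mult_left by (fastforce simp: algebra_simps)

lemma cong_A_mult: "cong_A n p q \<Longrightarrow> cong_A n p' q' \<Longrightarrow> cong_A n (p * p') (q * q')"
  by (metis cong_A_mult_left cong_A_trans mult.commute)

lemma cong_A_in_I_n: "cong_A n p q \<Longrightarrow> q \<in> I_n n \<Longrightarrow> p \<in> I_n n"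
  unfolding cong_A_def using I_n_add by fastforce

lemma cong_A_monom2_xn_y2:
  assumes "i = i' + n" "j' = j + n" "2 \<le> j"
  shows "cong_A n (monom2 c i j) (monom2 c i' j')"
proof -
  obtain j0 where j: "j = j0 + 2" using assms(3) by (metis add.commute le_Suc_ex)
  show ?thesis
    using I_n_mult_left[OF monom2_xn_y2_diff_in_I_n, of "monom2 c i' j0" n] assms
    unfolding j by (simp add: cong_A_def right_diff_distrib monom2_mult add_ac)
qed

lemma cong_A_monom2_x2n1:
  assumes "i = i' + 2*n" "j' = j + n + 1" "1 \<le> i'"
  shows "cong_A n (monom2 c i j) (monom2 c i' j')"
proof -
  obtain i0 where i': "i' = i0 + 1" using assms(3) by (metis add.commute le_Suc_ex)
  show ?thesis
    using I_n_mult_left[OF monom2_x2n1_diff_in_I_n, of "monom2 c i0 j" n] assms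
    unfolding i' by (simp add: cong_A_def right_diff_distrib monom2_mult add_ac)
qed

lemma monom2_high_y_in_I_n: "2*n+3 \<le> j \<Longrightarrow> monom2 c i j \<in> I_n n"
  using I_n_mult_left[OF monom2_y_2n3_in_I_n, of "monom2 c i (j - (2*n+3))" n]
  by (simp add: monom2_mult)

definition vanishing_monomial :: "nat \<Rightarrow> nat \<Rightarrow> nat \<Rightarrow> bool" where
  "vanishing_monomial n i j \<longleftrightarrow>
     2*n+3 \<le> j \<or> (1 \<le> i \<and> n+3 \<le> j) \<or> (n+1 \<le> i \<and> 3 \<le> j) \<or> 3*n+2 \<le> i + j"

lemma monom2_in_I_n_mono:
  fixes c :: "'a::comm_ring_1"
  assumes "monom2 (1::'a) i j \<in> I_n n" "i \<le> i'" "j \<le> j'"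
  shows "monom2 c i' j' \<in> I_n n"
  using I_n_mult_left[OF assms(1), of "monom2 c (i' - i) (j' - j)"] assms(2,3)
  by (simp add: monom2_mult)

lemma monom2_x_y_n3_in_I_n:
  assumes "2 \<le> n"
  shows "monom2 1 1 (n+3) \<in> I_n n"
proof -
  have "cong_A n (monom2 1 (2*n+1) 2) (monom2 1 1 (n+3))"
    by (rule cong_A_monom2_x2n1) simp_all
  then have "cong_A n (monom2 1 1 (n+3)) (monom2 1 (2*n+1) 2)"
    by (rule cong_A_sym)
  also have "cong_A n \<dots> (monom2 1 (n+1) (n+2))"
    by (rule cong_A_monom2_xn_y2) simp_all
  also have "cong_A n \<dots> (monom2 1 1 (2*n+2))"
    by (rule cong_A_monom2_xn_y2) simp_all
  finally have step: "cong_A n (monom2 1 1 (n+3)) (monom2 1 1 (2*n+2))"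
    using cong_A_trans by blast
  have "cong_A n (monom2 1 1 (2*n+2)) (monom2 1 1 (3*n+1))"
    using cong_A_mult_left[OF step, of "monom2 1 0 (n-1)"] assms by (simp add: monom2_mult)
  with step have "cong_A n (monom2 1 1 (n+3)) (monom2 1 1 (3*n+1))"
    by (rule cong_A_trans)
  moreover have "monom2 1 1 (3*n+1) \<in> I_n n"
    using assms by (intro monom2_high_y_in_I_n) simp
  ultimately show ?thesis by (rule cong_A_in_I_n)
qed

lemma monom2_in_I_n:
  fixes c :: "'a::comm_ring_1"
  assumes n: "2 \<le> n" and "vanishing_monomial n i j"
  shows "monom2 c i j \<in> I_n n"
proof -
  have y: "monom2 c i j \<in> I_n n" if "2*n+3 \<le> j" for c :: 'a and i j
    using that by (rule monom2_high_y_in_I_n)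
  have xy: "monom2 c i j \<in> I_n n" if "1 \<le> i" "n+3 \<le> j" for c :: 'a and i j
    using monom2_in_I_n_mono[OF monom2_x_y_n3_in_I_n[OF n]] that by blast
  have x_y3: "monom2 c i j \<in> I_n n" if "n+1 \<le> i" "3 \<le> j" for c :: 'a and i j
  proof -
    have "cong_A n (monom2 c i j) (monom2 c (i - n) (j + n))"
      using that by (intro cong_A_monom2_xn_y2) simp_all
    moreover have "monom2 c (i - n) (j + n) \<in> I_n n"
      using that by (intro xy) simp_all
    ultimately show ?thesis by (rule cong_A_in_I_n)
  qed
  have "2*n+3 \<le> j \<or> (1 \<le> i \<and> n+3 \<le> j) \<or> (n+1 \<le> i \<and> 3 \<le> j) \<or>
      (j = 2 \<and> 3*n \<le> i) \<or> (j \<le> 1 \<and> 3*n+1 \<le> i)"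
    using assms unfolding vanishing_monomial_def
    by (cases "i = 0"; cases "n+1 \<le> i"; cases "j \<le> 1"; simp; linarith)
  then consider "2*n+3 \<le> j" | "1 \<le> i \<and> n+3 \<le> j" | "n+1 \<le> i \<and> 3 \<le> j"
    | "j = 2" "3*n \<le> i" | "j \<le> 1" "3*n+1 \<le> i"
    by blast
  then show ?thesis
  proof cases
    case 4
    then have "cong_A n (monom2 c i j) (monom2 c (i - n) (n + 2))"
      by (intro cong_A_monom2_xn_y2) simp_all
    moreover have "monom2 c (i - n) (n + 2) \<in> I_n n"
      using 4 n by (intro x_y3) simp_all
    ultimately show ?thesis by (rule cong_A_in_I_n)
  next
    case 5
    then have "cong_A n (monom2 c i j) (monom2 c (i - 2*n) (j + n + 1))"
      using n by (intro cong_A_monom2_x2n1) simp_all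
    moreover have "monom2 c (i - 2*n) (j + n + 1) \<in> I_n n"
      using 5 n by (intro x_y3) simp_all
    ultimately show ?thesis by (rule cong_A_in_I_n)
  qed (use y xy x_y3 in blast)+
qed

lemma in_I_n_if_vanishing_support:
  assumes "2 \<le> n" "\<And>i j. coeff2 p i j \<noteq> 0 \<Longrightarrow> vanishing_monomial n i j"
  shows "p \<in> I_n n"
proof -
  have "(\<Sum>j\<le>degree p. \<Sum>i\<le>degree (coeff p j). monom2 (coeff2 p i j) i j) \<in> I_n n"
  proof (intro I_n_sum)
    fix i j
    show "monom2 (coeff2 p i j) i j \<in> I_n n"
      using assms by (cases "coeff2 p i j = 0") (simp_all add: I_n_0 monom2_in_I_n)
  qed
  then show ?thesis
    using poly2_as_sum_of_monom2[of p] by simp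
qed

section \<open>Coefficient sums that vanish on \<open>I\<^sub>n\<close>\<close>

definition coeff_sum :: "(nat \<times> nat) set \<Rightarrow> 'a::comm_monoid_add poly poly \<Rightarrow> 'a" where
  "coeff_sum S p = (\<Sum>s\<in>S. coeff2 p (fst s) (snd s))"

definition I_n_saturated :: "nat \<Rightarrow> (nat \<times> nat) set \<Rightarrow> bool" where
  "I_n_saturated n S \<longleftrightarrow> finite S \<and>
     (\<forall>i j. (i+n, j+2) \<in> S \<longleftrightarrow> (i, j+n+2) \<in> S) \<and>
     (\<forall>i j. (i+2*n+1, j) \<in> S \<longleftrightarrow> (i+1, j+n+1) \<in> S) \<and>
     (\<forall>i j. (i, j+2*n+3) \<notin> S)"

lemma coeff_sum_add: "coeff_sum S (p + q) = coeff_sum S p + coeff_sum S q"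
  by (simp add: coeff_sum_def sum.distrib)

lemma coeff_sum_diff:
  fixes p :: "'a::ab_group_add poly poly"
  shows "coeff_sum S (p - q) = coeff_sum S p - coeff_sum S q"
  by (simp add: coeff_sum_def sum_subtractf)

lemma coeff_sum_mult_monom2:
  fixes q :: "'a::comm_ring_1 poly poly"
  assumes "finite S"
  shows "coeff_sum S (q * monom2 1 a b) = coeff_sum {t. (fst t + a, snd t + b) \<in> S} q"
proof -
  let ?T = "{t. (fst t + a, snd t + b) \<in> S}" and ?shift = "\<lambda>t. (fst t + a, snd t + b)"
  have "coeff_sum S (q * monom2 1 a b) =
      (\<Sum>s\<in>S. if a \<le> fst s \<and> b \<le> snd s then coeff2 q (fst s - a) (snd s - b) else 0)"
    by (simp add: coeff_sum_def coeff2_mult_monom2 cong: if_cong)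
  also have "\<dots> = (\<Sum>s\<in>{s\<in>S. a \<le> fst s \<and> b \<le> snd s}. coeff2 q (fst s - a) (snd s - b))"
    using assms by (simp add: sum.inter_filter)
  also have "{s\<in>S. a \<le> fst s \<and> b \<le> snd s} = ?shift ` ?T"
  proof
    show "{s\<in>S. a \<le> fst s \<and> b \<le> snd s} \<subseteq> ?shift ` ?T"
    proof
      fix s assume "s \<in> {s\<in>S. a \<le> fst s \<and> b \<le> snd s}"
      then show "s \<in> ?shift ` ?T"
        by (intro image_eqI[of _ _ "(fst s - a, snd s - b)"]) auto
    qed
  qed auto
  also have "(\<Sum>s\<in>?shift ` ?T. coeff2 q (fst s - a) (snd s - b)) = coeff_sum ?T q"
    unfolding coeff_sum_def by (subst sum.reindex) (auto simp: inj_on_def)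
  finally show ?thesis .
qed

lemma coeff_sum_I_n:
  assumes S: "I_n_saturated n S" and "p \<in> I_n n"
  shows "coeff_sum S p = 0"
proof -
  have fin: "finite S" using S by (simp add: I_n_saturated_def)
  obtain g1 g2 g3 where p: "p = g1 * monom2 1 0 (2*n+3) + g2 * (monom2 1 n 2 - monom2 1 0 (n+2))
     + g3 * (monom2 1 (2*n+1) 0 - monom2 1 1 (n+1))"
    using assms(2) by (elim I_nE)
      (simp only: var_x_eq_monom2 var_y_eq_monom2 monom2_power monom2_mult power_one mult_1
        mult_1_right mult_0 add_0 add_0_right)
  have "coeff_sum S p = coeff_sum S (g1 * monom2 1 0 (2*n+3))
      + (coeff_sum S (g2 * monom2 1 n 2) - coeff_sum S (g2 * monom2 1 0 (n+2)))
      + (coeff_sum S (g3 * monom2 1 (2*n+1) 0) - coeff_sum S (g3 * monom2 1 1 (n+1)))"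
    unfolding p by (simp add: coeff_sum_add coeff_sum_diff right_diff_distrib)
  also have "\<dots> = 0"
  proof -
    have "{t. (fst t + 0, snd t + (2*n+3)) \<in> S} = {}"
      and "{t. (fst t + n, snd t + 2) \<in> S} = {t. (fst t + 0, snd t + (n+2)) \<in> S}"
      and "{t. (fst t + (2*n+1), snd t + 0) \<in> S} = {t. (fst t + 1, snd t + (n+1)) \<in> S}"
      using S unfolding I_n_saturated_def by (auto simp: add.assoc)
    then show ?thesis
      unfolding coeff_sum_mult_monom2[OF fin] by (simp add: coeff_sum_def)
  qed
  finally show ?thesis .
qed

lemma coeff_sum_cong_A: "I_n_saturated n S \<Longrightarrow> cong_A n p q \<Longrightarrow> coeff_sum S p = coeff_sum S q"
  using coeff_sum_I_n[of n S "p - q"] by (simp add: cong_A_def coeff_sum_diff)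

lemma coeff_sum_singleton: "coeff_sum {(i, j)} p = coeff2 p i j"
  by (simp add: coeff_sum_def)

lemma coeff_sum_pair: "s \<noteq> t \<Longrightarrow> coeff_sum {s, t} p = coeff2 p (fst s) (snd s) + coeff2 p (fst t) (snd t)"
  by (simp add: coeff_sum_def)

lemma I_n_saturated_low: "1 \<le> n \<Longrightarrow> i + j \<le> 1 \<Longrightarrow> I_n_saturated n {(i, j)}"
  by (auto simp: I_n_saturated_def)

lemma coeff2_low_cong_A:
  assumes "1 \<le> n" "i + j \<le> 1" "cong_A n p q"
  shows "coeff2 p i j = coeff2 q i j"
  using coeff_sum_cong_A[OF I_n_saturated_low[OF assms(1,2)] assms(3)] by (simp add: coeff_sum_def)

lemma coeff2_0_0_if_nilpotent:
  fixes p :: "'a::idom poly poly"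
  assumes "1 \<le> n" "0 < k" "cong_A n (p ^ k) 0"
  shows "coeff2 p 0 0 = 0"
  using coeff2_low_cong_A[OF assms(1) _ assms(3), of 0 0] assms(2)
  by (simp add: coeff2_power_0_0)

section \<open>Automorphisms of \<open>A\<^sub>n\<close>: the terms of order one\<close>

locale A_automorphism =
  fixes n :: nat and \<phi> :: "'a::field poly poly \<Rightarrow> 'a poly poly"
  assumes n_ge_2: "2 \<le> n" and aut: "is_aut_A n \<phi>"
begin

lemma phi_cong_A: "cong_A n p q \<Longrightarrow> cong_A n (\<phi> p) (\<phi> q)"
  and phi_add: "cong_A n (\<phi> (p + q)) (\<phi> p + \<phi> q)"
  and phi_mult: "cong_A n (\<phi> (p * q)) (\<phi> p * \<phi> q)"
  and phi_const2_mult: "cong_A n (\<phi> (const2 c * p)) (const2 c * \<phi> p)"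
  and phi_1: "cong_A n (\<phi> 1) 1"
  and phi_surj: "\<exists>p. cong_A n (\<phi> p) q"
  using aut unfolding is_aut_A_def by blast+

lemma phi_add_cong:
  "cong_A n (\<phi> p) r \<Longrightarrow> cong_A n (\<phi> q) s \<Longrightarrow> cong_A n (\<phi> (p + q)) (r + s)"
  using phi_add cong_A_add cong_A_trans by blast

lemma phi_mult_cong:
  "cong_A n (\<phi> p) r \<Longrightarrow> cong_A n (\<phi> q) s \<Longrightarrow> cong_A n (\<phi> (p * q)) (r * s)"
  using phi_mult cong_A_mult cong_A_trans by blast

lemma phi_0: "cong_A n (\<phi> 0) 0"
proof -
  have "cong_A n (\<phi> 0 + \<phi> 0) (\<phi> 0)"
    using cong_A_sym[OF phi_add[of 0 0]] by simp
  then show ?thesis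
    using cong_A_add[OF _ cong_A_refl, of n "\<phi> 0 + \<phi> 0" "\<phi> 0" "- \<phi> 0"] by simp
qed

lemma phi_power: "cong_A n (\<phi> (p ^ k)) (\<phi> p ^ k)"
  by (induction k) (simp_all add: phi_1 phi_mult_cong)

lemma phi_const2: "cong_A n (\<phi> (const2 c)) (const2 c)"
  using phi_const2_mult[of c 1] cong_A_mult_left[OF phi_1, of "const2 c"] cong_A_trans by fastforce

definition f :: "'a poly poly" where "f = \<phi> var_x"
definition g :: "'a poly poly" where "g = \<phi> var_y"

lemma phi_monomial: "cong_A n (\<phi> (var_x ^ i * var_y ^ j)) (f ^ i * g ^ j)"
  unfolding f_def g_def by (intro phi_mult_cong phi_power)

lemma f_g_rel2: "cong_A n (f ^ n * g ^ 2) (g ^ (n+2))"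
proof -
  have "cong_A n (var_x ^ n * var_y ^ 2) (var_x ^ 0 * var_y ^ (n+2))"
    using monom2_xn_y2_diff_in_I_n[of n]
    by (simp only: cong_A_def var_x_power_mult_var_y_power)
  then have "cong_A n (f ^ n * g ^ 2) (f ^ 0 * g ^ (n+2))"
    by (meson phi_cong_A phi_monomial cong_A_sym cong_A_trans)
  then show ?thesis by simp
qed

lemma f_g_rel3: "cong_A n (f ^ (2*n+1)) (f * g ^ (n+1))"
proof -
  have "cong_A n (var_x ^ (2*n+1) * var_y ^ 0) (var_x ^ 1 * var_y ^ (n+1))"
    using monom2_x2n1_diff_in_I_n[of n]
    by (simp only: cong_A_def var_x_power_mult_var_y_power)
  then have "cong_A n (f ^ (2*n+1) * g ^ 0) (f ^ 1 * g ^ (n+1))"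
    by (meson phi_cong_A phi_monomial cong_A_sym cong_A_trans)
  then show ?thesis by simp
qed

lemma phi_nilpotent: "cong_A n (p ^ k) 0 \<Longrightarrow> cong_A n (\<phi> p ^ k) 0"
  by (meson phi_0 phi_cong_A phi_power cong_A_sym cong_A_trans)

lemma f_0_0: "coeff2 f 0 0 = 0"
proof (rule coeff2_0_0_if_nilpotent)
  have "monom2 1 (3*n+2) 0 \<in> I_n n"
    using n_ge_2 by (intro monom2_in_I_n) (simp_all add: vanishing_monomial_def)
  then have "cong_A n (var_x ^ (3*n+2)) 0"
    by (simp only: cong_A_def var_x_power_eq_monom2 diff_zero)
  then show "cong_A n (f ^ (3*n+2)) 0"
    unfolding f_def by (rule phi_nilpotent)
qed (use n_ge_2 in simp_all)

lemma g_0_0: "coeff2 g 0 0 = 0"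
proof (rule coeff2_0_0_if_nilpotent)
  have "cong_A n (var_y ^ (2*n+3)) 0"
    using monom2_y_2n3_in_I_n by (simp only: cong_A_def var_y_power_eq_monom2 diff_zero)
  then show "cong_A n (g ^ (2*n+3)) 0"
    unfolding g_def by (rule phi_nilpotent)
qed (use n_ge_2 in simp_all)

abbreviation a :: 'a where "a \<equiv> coeff2 f 1 0"
abbreviation b :: 'a where "b \<equiv> coeff2 f 0 1"
abbreviation c :: 'a where "c \<equiv> coeff2 g 1 0"
abbreviation d :: 'a where "d \<equiv> coeff2 g 0 1"

lemma coeff2_low_phi_cong_A:
  assumes "cong_A n (\<phi> p) r"
  shows "coeff2 (\<phi> p) 0 0 = coeff2 r 0 0" "coeff2 (\<phi> p) 1 0 = coeff2 r 1 0"
    "coeff2 (\<phi> p) 0 1 = coeff2 r 0 1"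
  using coeff2_low_cong_A[OF _ _ assms] n_ge_2 by simp_all

lemma coeff2_phi_const:
  "coeff2 (\<phi> [:q:]) 0 0 = coeff q 0 \<and> coeff2 (\<phi> [:q:]) 1 0 = a * coeff q 1 \<and>
   coeff2 (\<phi> [:q:]) 0 1 = b * coeff q 1"
proof (induction q)
  case 0
  show ?case using coeff2_low_phi_cong_A[OF phi_0] by simp
next
  case (pCons e q)
  have "[:pCons e q:] = const2 e + var_x * [:q:]"
    by (simp add: const2_def var_x_def)
  then have r: "cong_A n (\<phi> [:pCons e q:]) (const2 e + f * \<phi> [:q:])"
    unfolding f_def by (metis phi_add_cong phi_const2 phi_mult_cong cong_A_refl)
  have "coeff2 (f * \<phi> [:q:]) 0 0 = 0"
    unfolding coeff2_mult_0_0 using f_0_0 by simp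
  moreover have "coeff2 (f * \<phi> [:q:]) 1 0 = a * coeff q 0"
    unfolding coeff2_mult_1_0 using pCons.IH f_0_0 by simp
  moreover have "coeff2 (f * \<phi> [:q:]) 0 1 = b * coeff q 0"
    unfolding coeff2_mult_0_1 using pCons.IH f_0_0 by simp
  ultimately show ?case
    using coeff2_low_phi_cong_A[OF r] by (simp add: const2_eq_monom2 coeff2_monom2)
qed

lemma coeff2_phi_linear:
  "coeff2 (\<phi> p) 0 0 = coeff2 p 0 0 \<and>
   coeff2 (\<phi> p) 1 0 = a * coeff2 p 1 0 + c * coeff2 p 0 1 \<and>
   coeff2 (\<phi> p) 0 1 = b * coeff2 p 1 0 + d * coeff2 p 0 1"
proof (induction p)
  case 0
  show ?case using coeff2_low_phi_cong_A[OF phi_0] by simp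
next
  case (pCons q p)
  have "pCons q p = [:q:] + var_y * p"
    by (simp add: var_y_def)
  then have r: "cong_A n (\<phi> (pCons q p)) (\<phi> [:q:] + g * \<phi> p)"
    unfolding g_def by (metis phi_add_cong phi_mult_cong cong_A_refl)
  have "coeff2 (g * \<phi> p) 0 0 = 0"
    unfolding coeff2_mult_0_0 using g_0_0 by simp
  moreover have "coeff2 (g * \<phi> p) 1 0 = c * coeff2 p 0 0"
    unfolding coeff2_mult_1_0 using pCons.IH g_0_0 by simp
  moreover have "coeff2 (g * \<phi> p) 0 1 = d * coeff2 p 0 0"
    unfolding coeff2_mult_0_1 using pCons.IH g_0_0 by simp
  moreover have "coeff2 (pCons q p) 0 0 = coeff q 0" "coeff2 (pCons q p) 1 0 = coeff q 1"
    "coeff2 (pCons q p) 0 1 = coeff2 p 0 0"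
    by (simp_all add: coeff2_def)
  ultimately show ?case
    using coeff2_low_phi_cong_A[OF r] coeff2_phi_const[of q] by simp
qed

lemma jacobian_nonzero: "a * d - c * b \<noteq> 0"
proof
  assume det: "a * d - c * b = 0"
  obtain p q where p: "cong_A n (\<phi> p) var_x" and q: "cong_A n (\<phi> q) var_y"
    using phi_surj by metis
  have "a * coeff2 p 1 0 + c * coeff2 p 0 1 = 1" "b * coeff2 p 1 0 + d * coeff2 p 0 1 = 0"
    "a * coeff2 q 1 0 + c * coeff2 q 0 1 = 0" "b * coeff2 q 1 0 + d * coeff2 q 0 1 = 1"
    using coeff2_phi_linear[of p] coeff2_phi_linear[of q] coeff2_low_phi_cong_A[OF p]
      coeff2_low_phi_cong_A[OF q]
    by (simp_all add: var_x_eq_monom2 var_y_eq_monom2 coeff2_monom2)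
  then have "(a * d - c * b) * (coeff2 p 1 0 * coeff2 q 0 1 - coeff2 p 0 1 * coeff2 q 1 0) = 1"
    by algebra
  with det show False by simp
qed

lemma coeff2_f_g_low:
  assumes "i + j \<le> k + m"
  shows "coeff2 (f ^ k * g ^ m) i j = coeff2 (linear_part f ^ k * linear_part g ^ m) i j"
  using agree_below_coeff2[OF agree_below_linear_part_power_mult[OF f_0_0 g_0_0]] assms by simp

lemma coeff2_f_g_y0: "i = k + m \<Longrightarrow> coeff2 (f ^ k * g ^ m) i 0 = a ^ k * c ^ m"
  using coeff2_f_g_low[of i 0 k m] coeff2_linear_part_power_mult_y0[of f k g m] by simp

lemma coeff2_f_g_below: "i + j < k + m \<Longrightarrow> coeff2 (f ^ k * g ^ m) i j = 0"
proof -
  have "order_ge 1 f" "order_ge 1 g"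
    using f_0_0 g_0_0 order_ge_1_iff by blast+
  then have "order_ge (k * 1 + m * 1) (f ^ k * g ^ m)"
    by (intro worder_ge_mult worder_ge_power)
  then show "i + j < k + m \<Longrightarrow> coeff2 (f ^ k * g ^ m) i j = 0"
    by (simp add: worder_ge_coeff2)
qed

lemma c_eq_0: "c = 0"
proof (rule ccontr)
  assume c: "c \<noteq> 0"
  have S: "I_n_saturated n {(n+2, 0)}"
    using n_ge_2 unfolding I_n_saturated_def by auto
  have "coeff2 (f ^ (2*n+1) * g ^ 0) (n+2) 0 = coeff2 (f ^ 1 * g ^ (n+1)) (n+2) 0"
    using coeff_sum_cong_A[OF S f_g_rel3] by (simp add: coeff_sum_singleton)
  moreover have "coeff2 (f ^ (2*n+1) * g ^ 0) (n+2) 0 = 0"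
    using n_ge_2 by (intro coeff2_f_g_below) simp
  moreover have "coeff2 (f ^ 1 * g ^ (n+1)) (n+2) 0 = a ^ 1 * c ^ (n+1)"
    by (rule coeff2_f_g_y0) simp
  ultimately have "a = 0"
    using c by simp
  have "coeff2 (f ^ n * g ^ 2) (n+2) 0 = coeff2 (f ^ 0 * g ^ (n+2)) (n+2) 0"
    using coeff_sum_cong_A[OF S f_g_rel2] by (simp add: coeff_sum_singleton)
  moreover have "coeff2 (f ^ n * g ^ 2) (n+2) 0 = a ^ n * c ^ 2"
    by (rule coeff2_f_g_y0) simp
  moreover have "coeff2 (f ^ 0 * g ^ (n+2)) (n+2) 0 = a ^ 0 * c ^ (n+2)"
    by (rule coeff2_f_g_y0) simp
  ultimately have "a ^ n * c ^ 2 = c ^ (n+2)"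
    by simp
  with \<open>a = 0\<close> c n_ge_2 show False
    by (simp add: power_0_left)
qed

lemma linear_part_g: "linear_part g = monom2 d 0 1"
  using c_eq_0 by (simp add: linear_part_def)

lemma a_d_nonzero: "a \<noteq> 0" "d \<noteq> 0"
  using jacobian_nonzero c_eq_0 by auto

lemma b_eq_0: "b = 0"
proof -
  have S: "I_n_saturated n {(n, 2), (0, n+2)}"
    using n_ge_2 unfolding I_n_saturated_def by auto
  have lin: "linear_part f ^ 1 * linear_part g ^ (n+1) = linear_part f * monom2 (d ^ (n+1)) 0 (n+1)"
    by (simp only: linear_part_g monom2_power power_one_right mult_zero_left mult_1)
  have fg: "coeff2 (f ^ 1 * g ^ (n+1)) i j = coeff2 (linear_part f * monom2 (d ^ (n+1)) 0 (n+1)) i j"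
    if "i + j = n + 2" for i j
  proof -
    have "coeff2 (f ^ 1 * g ^ (n+1)) i j = coeff2 (linear_part f ^ 1 * linear_part g ^ (n+1)) i j"
      using that by (intro coeff2_f_g_low) simp
    then show ?thesis
      by (simp only: lin)
  qed
  have "coeff2 (f ^ (2*n+1) * g ^ 0) n 2 + coeff2 (f ^ (2*n+1) * g ^ 0) 0 (n+2)
      = coeff2 (f ^ 1 * g ^ (n+1)) n 2 + coeff2 (f ^ 1 * g ^ (n+1)) 0 (n+2)"
    using coeff_sum_cong_A[OF S f_g_rel3] n_ge_2 by (simp add: coeff_sum_pair)
  then have "b * d ^ (n+1) = 0"
    using n_ge_2 coeff2_f_g_below[of n 2 "2*n+1" 0] coeff2_f_g_below[of 0 "n+2" "2*n+1" 0]
      fg[of n 2] fg[of 0 "n+2"]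
    by (auto simp: coeff2_mult_monom2 coeff2_linear_part)
  then show ?thesis
    using a_d_nonzero by simp
qed

lemma linear_part_f: "linear_part f = monom2 a 1 0"
  using b_eq_0 by (simp add: linear_part_def)

lemma coeff2_f_g_low_monomial:
  assumes "i + j \<le> k + m"
  shows "coeff2 (f ^ k * g ^ m) i j = (if i = k \<and> j = m then a ^ k * d ^ m else 0)"
proof -
  have "linear_part f ^ k * linear_part g ^ m = monom2 (a ^ k * d ^ m) k m"
    by (simp only: linear_part_f linear_part_g monom2_power monom2_mult mult_1 mult_zero_left
        add_0_right add_0)
  then show ?thesis
    using coeff2_f_g_low[OF assms] by (simp add: coeff2_monom2)
qed

lemma f_g_rel2_lowest_order: "a ^ n * d ^ 2 = d ^ (n+2)"
proof -
  have S: "I_n_saturated n {(n, 2), (0, n+2)}"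
    using n_ge_2 unfolding I_n_saturated_def by auto
  have "coeff2 (f ^ n * g ^ 2) n 2 + coeff2 (f ^ n * g ^ 2) 0 (n+2)
      = coeff2 (f ^ 0 * g ^ (n+2)) n 2 + coeff2 (f ^ 0 * g ^ (n+2)) 0 (n+2)"
    using coeff_sum_cong_A[OF S f_g_rel2] n_ge_2 by (simp add: coeff_sum_pair)
  then show ?thesis
    using n_ge_2 by (simp only: coeff2_f_g_low_monomial) simp
qed

lemma f_worder_ge_1_3: "worder_ge 1 3 1 f"
  using f_0_0 by (simp add: worder_ge_def)

lemma g_worder_ge_1_3: "worder_ge 1 3 2 g"
proof -
  have "1 * i + 3 * j < 2 \<Longrightarrow> (i, j) = (0, 0) \<or> (i, j) = (1, 0)" for i j :: nat
    by auto
  then show ?thesis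
    using g_0_0 c_eq_0 unfolding worder_ge_def by fastforce
qed

lemma f_g_rel3_lowest_order: "a ^ (2*n+1) = a * d ^ (n+1)"
proof -
  have S: "I_n_saturated n {(1, n+1), (2*n+1, 0)}"
    using n_ge_2 unfolding I_n_saturated_def by auto
  have "worder_ge 1 3 (1 + (n+1) * 2) (f * g ^ (n+1))"
    by (intro worder_ge_mult worder_ge_power f_worder_ge_1_3 g_worder_ge_1_3)
  then have "coeff2 (f ^ 1 * g ^ (n+1)) (2*n+1) 0 = 0"
    by (simp add: worder_ge_coeff2)
  moreover have "coeff2 (f ^ (2*n+1) * g ^ 0) 1 (n+1) + coeff2 (f ^ (2*n+1) * g ^ 0) (2*n+1) 0
      = coeff2 (f ^ 1 * g ^ (n+1)) 1 (n+1) + coeff2 (f ^ 1 * g ^ (n+1)) (2*n+1) 0"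
    using coeff_sum_cong_A[OF S f_g_rel3] by (simp add: coeff_sum_pair)
  ultimately show ?thesis
    using n_ge_2 by (simp only: coeff2_f_g_low_monomial) simp
qed

lemma d_power_n_minus_1: "d ^ (n-1) = 1"
  and a_power_n: "a ^ n = d"
proof -
  obtain m where n: "n = Suc m"
    using n_ge_2 by (cases n) auto
  have "a ^ n * d ^ 2 = d ^ n * d ^ 2"
    using f_g_rel2_lowest_order by (simp only: power_add)
  then have an: "a ^ n = d ^ n"
    using a_d_nonzero by simp
  have "a ^ (2*n) * a = d ^ (n+1) * a"
    using f_g_rel3_lowest_order by (simp only: power_add power_one_right mult.commute)
  then have "a ^ (2*n) = d ^ (n+1)"
    using a_d_nonzero by simp
  moreover have "a ^ (2*n) = d ^ (2*n)"
    by (simp only: mult.commute[of 2 n] power_mult an)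
  moreover have "d ^ (2*n) = d ^ m * d ^ (n+1)"
  proof -
    have "2*n = m + (n+1)" using n by simp
    then show ?thesis by (simp only: power_add)
  qed
  ultimately have "d ^ m * d ^ (n+1) = 1 * d ^ (n+1)"
    by simp
  moreover have "d ^ (n+1) \<noteq> 0"
    using a_d_nonzero by simp
  ultimately have "d ^ m = 1"
    using mult_right_cancel by blast
  then show "d ^ (n-1) = 1" "a ^ n = d"
    using an n by simp_all
qed

lemma d_cube_power_n_minus_1: "(d ^ 3) ^ (n-1) = 1"
proof -
  have "(d ^ 3) ^ (n-1) = (d ^ (n-1)) ^ 3"
    by (simp only: power_mult[symmetric] mult.commute)
  then show ?thesis
    by (simp only: d_power_n_minus_1 power_one)
qed

lemma d_cube_power_n_minus_1_div_3: "n mod 3 = 1 \<Longrightarrow> (d ^ 3) ^ ((n-1) div 3) = 1"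
proof -
  assume "n mod 3 = 1"
  then have "3 * ((n-1) div 3) = n-1"
    using n_ge_2 by presburger
  then show ?thesis
    by (simp only: power_mult[symmetric] d_power_n_minus_1)
qed

section \<open>The terms of order two\<close>

definition vf :: "'a poly poly" where "vf = f - monom2 a 1 0"
definition vg :: "'a poly poly" where "vg = g - monom2 d 0 1"

lemma order_ge_2_vf: "order_ge 2 vf"
  using agree_below_linear_part[OF f_0_0] by (simp add: agree_below_def linear_part_f vf_def)

lemma order_ge_2_vg: "order_ge 2 vg"
  using agree_below_linear_part[OF g_0_0] by (simp add: agree_below_def linear_part_g vg_def)

lemma coeff2_vf: "coeff2 vf i j = (if (i, j) = (1, 0) then 0 else coeff2 f i j)"
  by (simp add: vf_def coeff2_monom2)

lemma coeff2_vg: "coeff2 vg i j = (if (i, j) = (0, 1) then 0 else coeff2 g i j)"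
  by (simp add: vg_def coeff2_monom2)

lemma coeff2_f_g_second_order:
  assumes "i + j < k + m + 2"
  shows "coeff2 (f ^ k * g ^ m) i j =
      (if i = k \<and> j = m then a ^ k * d ^ m else 0)
    + (if k \<le> i \<and> m - 1 \<le> j
       then of_nat m * a ^ k * d ^ (m - 1) * coeff2 vg (i - k) (j - (m - 1)) else 0)
    + (if k - 1 \<le> i \<and> m \<le> j
       then of_nat k * a ^ (k - 1) * d ^ m * coeff2 vf (i - (k - 1)) (j - m) else 0)"
proof -
  have "order_ge 1 (monom2 a 1 0)" "order_ge 1 (monom2 d 0 1)"
    by (simp_all add: worder_ge_monom2)
  from agree_below_binomial_mult[OF this(1) order_ge_2_vf this(2) order_ge_2_vg, of k m]
  have "coeff2 (f ^ k * g ^ m) i j = coeff2 (monom2 a 1 0 ^ k * monom2 d 0 1 ^ m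
      + (monom2 a 1 0 ^ k * (of_nat m * (monom2 d 0 1 ^ (m - 1) * vg))
      + of_nat k * (monom2 a 1 0 ^ (k - 1) * vf) * monom2 d 0 1 ^ m)) i j"
    using agree_below_coeff2 assms unfolding vf_def vg_def by fastforce
  then show ?thesis
    by (simp add: monom2_power of_nat_eq_monom2 monom2_mult coeff2_monom2 coeff2_monom2_mult
        coeff2_mult_monom2 mult.assoc ac_simps)
qed

end

lemma of_nat_n_times_pred_nonzero:
  assumes "2 \<le> n" "CHAR('a::field) = 0 \<or> (coprime (CHAR('a)) n \<and> coprime (CHAR('a)) (n - 1))"
  shows "of_nat (n * (n - 1)) \<noteq> (0::'a)"
proof
  assume "of_nat (n * (n - 1)) = (0::'a)"
  then have dvd: "CHAR('a) dvd n * (n - 1)"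
    by (simp only: of_nat_eq_0_iff_char_dvd)
  show False
  proof (cases "CHAR('a) = 0")
    case True
    then show False using dvd assms(1) by simp
  next
    case False
    then have "coprime (CHAR('a)) (n * (n - 1))"
      using assms(2) by simp
    then have "is_unit (CHAR('a))"
      using coprime_absorb_left[OF dvd] by blast
    then show False
      by simp
  qed
qed

locale A_automorphism_nondeg = A_automorphism +
  assumes n_times_pred_nonzero: "of_nat (n * (n - 1)) \<noteq> (0::'a)"
begin

lemma of_nat_n_nonzero: "of_nat n \<noteq> (0::'a)"
  and of_nat_n_neq_1: "of_nat n \<noteq> (1::'a)"
  using n_times_pred_nonzero n_ge_2 by (auto simp: of_nat_diff)

lemma two_nonzero: "(2::'a) \<noteq> 0"
proof -
  have "even (n * (n - 1))"
    by (cases "even n") auto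
  then obtain k where "n * (n - 1) = 2 * k" ..
  then show ?thesis
    using n_times_pred_nonzero by auto
qed

lemma g_2_0: "coeff2 g 2 0 = 0"
proof -
  have S: "I_n_saturated n {(n+2, 1)}"
    using n_ge_2 unfolding I_n_saturated_def by auto
  have "coeff2 (f ^ n * g ^ 2) (n+2) 1 = coeff2 (f ^ 0 * g ^ (n+2)) (n+2) 1"
    using coeff_sum_cong_A[OF S f_g_rel2] by (simp add: coeff_sum_singleton)
  moreover have "coeff2 (f ^ n * g ^ 2) (n+2) 1 = 2 * a ^ n * d * coeff2 g 2 0"
    using coeff2_f_g_second_order[of "n+2" 1 n 2] by (simp add: coeff2_vg)
  moreover have "coeff2 (f ^ 0 * g ^ (n+2)) (n+2) 1 = 0"
    using coeff2_f_g_second_order[of "n+2" 1 0 "n+2"] n_ge_2 by simp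
  ultimately show ?thesis
    using two_nonzero a_d_nonzero by simp
qed

lemma g_worder_ge_1_3_3: "worder_ge 1 3 3 g"
proof -
  have "1 * i + 3 * j < 3 \<Longrightarrow> (i, j) = (0, 0) \<or> (i, j) = (1, 0) \<or> (i, j) = (2, 0)" for i j :: nat
    by auto
  then show ?thesis
    using g_0_0 c_eq_0 g_2_0 unfolding worder_ge_def by fastforce
qed

lemma f_g_rel2_next_order:
  "2 * a ^ n * d * coeff2 g 0 2 + of_nat n * a ^ (n-1) * d ^ 2 * coeff2 f 1 1
     = of_nat (n+2) * d ^ (n+1) * coeff2 g 0 2"
proof -
  have fg_n_3: "coeff2 (f ^ n * g ^ 2) n 3
      = 2 * a ^ n * d * coeff2 g 0 2 + of_nat n * a ^ (n-1) * d ^ 2 * coeff2 f 1 1"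
    using coeff2_f_g_second_order[of n 3 n 2] n_ge_2 by (simp add: coeff2_vg coeff2_vf)
  have fg_0_n3: "coeff2 (f ^ n * g ^ 2) 0 (n+3) = 0"
    using coeff2_f_g_second_order[of 0 "n+3" n 2] n_ge_2 by simp
  have g_n_3: "coeff2 (f ^ 0 * g ^ (n+2)) n 3 = 0"
    using coeff2_f_g_second_order[of n 3 0 "n+2"] n_ge_2 g_2_0 by (cases "n = 2") (simp_all add: coeff2_vg)
  have g_0_n3: "coeff2 (f ^ 0 * g ^ (n+2)) 0 (n+3) = of_nat (n+2) * d ^ (n+1) * coeff2 g 0 2"
    using coeff2_f_g_second_order[of 0 "n+3" 0 "n+2"] by (simp add: coeff2_vg)
  have "coeff2 (f ^ n * g ^ 2) n 3 + coeff2 (f ^ n * g ^ 2) 0 (n+3)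
      = coeff2 (f ^ 0 * g ^ (n+2)) n 3 + coeff2 (f ^ 0 * g ^ (n+2)) 0 (n+3)"
  proof (cases "n = 2")
    case True
    \<comment> \<open>only for \<open>n = 2\<close> does the second relation tie \<open>(n, 3)\<close>
      to a third monomial, \<open>(6, 0)\<close>\<close>
    have S: "I_n_saturated n {(n, 3), (0, n+3), (6, 0)}"
      using True unfolding I_n_saturated_def by auto
    have "worder_ge 1 3 (n * 1 + 2 * 3) (f ^ n * g ^ 2)"
      by (intro worder_ge_mult worder_ge_power f_worder_ge_1_3 g_worder_ge_1_3_3)
    moreover have "worder_ge 1 3 ((n+2) * 3) (g ^ (n+2))"
      by (intro worder_ge_power g_worder_ge_1_3_3)
    ultimately have "coeff2 (f ^ n * g ^ 2) 6 0 = 0" "coeff2 (f ^ 0 * g ^ (n+2)) 6 0 = 0"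
      using True by (simp_all add: worder_ge_coeff2)
    then show ?thesis
      using coeff_sum_cong_A[OF S f_g_rel2] True by (simp add: coeff_sum_def)
  next
    case False
    have S: "I_n_saturated n {(n, 3), (0, n+3)}"
      using False n_ge_2 unfolding I_n_saturated_def by auto
    show ?thesis
      using coeff_sum_cong_A[OF S f_g_rel2] n_ge_2 by (simp add: coeff_sum_pair)
  qed
  then show ?thesis
    by (simp only: fg_n_3 fg_0_n3 g_n_3 g_0_n3 add_0_right add_0)
qed

lemma f_g_rel3_next_order:
  "of_nat (2*n+1) * a ^ (2*n) * coeff2 f 1 1
     = of_nat (n+1) * a * d ^ n * coeff2 g 0 2 + d ^ (n+1) * coeff2 f 1 1"
proof -
  have S: "I_n_saturated n {(1, n+2), (n+1, 2), (2*n+1, 1)}"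
    using n_ge_2 unfolding I_n_saturated_def by auto
  have "coeff2 (f ^ (2*n+1) * g ^ 0) 1 (n+2) = 0"
    using coeff2_f_g_second_order[of 1 "n+2" "2*n+1" 0] n_ge_2 by simp
  moreover have "coeff2 (f ^ (2*n+1) * g ^ 0) (n+1) 2 = 0"
    using coeff2_f_g_second_order[of "n+1" 2 "2*n+1" 0] n_ge_2 by simp
  moreover have "coeff2 (f ^ (2*n+1) * g ^ 0) (2*n+1) 1 = of_nat (2*n+1) * a ^ (2*n) * coeff2 f 1 1"
    using coeff2_f_g_second_order[of "2*n+1" 1 "2*n+1" 0] by (simp add: coeff2_vf)
  moreover have "coeff2 (f ^ 1 * g ^ (n+1)) 1 (n+2)
      = of_nat (n+1) * a * d ^ n * coeff2 g 0 2 + d ^ (n+1) * coeff2 f 1 1"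
    using coeff2_f_g_second_order[of 1 "n+2" 1 "n+1"] by (simp add: coeff2_vf coeff2_vg)
  moreover have "coeff2 (f ^ 1 * g ^ (n+1)) (n+1) 2 = 0"
    using coeff2_f_g_second_order[of "n+1" 2 1 "n+1"] n_ge_2 g_2_0
    by (cases "n = 2") (simp_all add: coeff2_vf coeff2_vg)
  moreover have "worder_ge 1 3 (1 * 1 + (n+1) * 3) (f ^ 1 * g ^ (n+1))"
    by (intro worder_ge_mult worder_ge_power f_worder_ge_1_3 g_worder_ge_1_3_3)
  then have "coeff2 (f ^ 1 * g ^ (n+1)) (2*n+1) 1 = 0"
    by (rule worder_ge_coeff2) (use n_ge_2 in simp)
  moreover have "coeff_sum {(1, n+2), (n+1, 2), (2*n+1, 1)} (f ^ (2*n+1) * g ^ 0)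
      = coeff_sum {(1, n+2), (n+1, 2), (2*n+1, 1)} (f ^ 1 * g ^ (n+1))"
    using coeff_sum_cong_A[OF S f_g_rel3] by simp
  ultimately show ?thesis
    using n_ge_2 by (simp add: coeff_sum_def)
qed

lemma g_0_2: "coeff2 g 0 2 = 0"
proof -
  obtain m where n: "n = Suc m"
    using n_ge_2 by (cases n) auto
  let ?N = "of_nat n :: 'a" and ?P = "a ^ m" and ?f11 = "coeff2 f 1 1" and ?g02 = "coeff2 g 0 2"
  have dm: "d ^ m = 1"
    using d_power_n_minus_1 n by simp
  have an1: "a ^ (n-1) = ?P" and aP: "a * ?P = d"
    using a_power_n n by simp_all
  have dn1: "d ^ (n+1) = d ^ 2" and dn: "d ^ n = d"
    using dm n by (simp_all add: power2_eq_square)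
  have a2n: "a ^ (2*n) = d ^ 2"
    by (simp only: mult.commute[of 2 n] power_mult a_power_n)
  have "2 * d * d * ?g02 + ?N * ?P * d ^ 2 * ?f11 = (?N + 2) * d ^ 2 * ?g02"
    using f_g_rel2_next_order unfolding a_power_n an1 dn1 by simp
  then have "?N * (?P * ?f11) * d ^ 2 = ?N * ?g02 * d ^ 2"
    by (simp add: algebra_simps power2_eq_square)
  then have g02: "?g02 = ?P * ?f11"
    using of_nat_n_nonzero a_d_nonzero by simp
  then have ag: "a * ?g02 = d * ?f11"
    using aP by (simp add: mult.assoc[symmetric])
  have "(2 * ?N + 1) * d ^ 2 * ?f11 = (?N + 1) * d * (a * ?g02) + d ^ 2 * ?f11"
    using f_g_rel3_next_order unfolding a2n dn1 dn by (simp add: algebra_simps)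
  then have "(2 * ?N + 1) * d ^ 2 * ?f11 = (?N + 1) * d * (d * ?f11) + d ^ 2 * ?f11"
    by (simp only: ag)
  then have "(?N - 1) * (d ^ 2 * ?f11) = 0"
    by (simp add: algebra_simps power2_eq_square)
  then have "?f11 = 0"
    using of_nat_n_neq_1 a_d_nonzero by simp
  then show ?thesis
    using g02 by simp
qed

section \<open>The image of \<open>y\<^sup>2\<^sup>n\<^sup>+\<^sup>1\<close>\<close>

lemma coeff2_vg_nonzero:
  assumes "coeff2 vg i j \<noteq> 0"
  shows "2 \<le> i + j" "(i, j) \<noteq> (0, 2)" "(i, j) \<noteq> (2, 0)"
proof -
  show "2 \<le> i + j"
    using worder_ge_coeff2_nonzero[OF order_ge_2_vg assms] by simp
  show "(i, j) \<noteq> (0, 2)"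
  proof
    assume "(i, j) = (0, 2)"
    then show False using assms g_0_2 by (simp add: coeff2_vg)
  qed
  show "(i, j) \<noteq> (2, 0)"
  proof
    assume "(i, j) = (2, 0)"
    then show False using assms g_2_0 by (simp add: coeff2_vg)
  qed
qed

lemma vg_power_mult_in_I_n:
  assumes K: "1 \<le> K" "K \<le> 2*n+1"
  shows "vg ^ K * monom2 e 0 (2*n+1-K) \<in> I_n n"
proof (rule in_I_n_if_vanishing_support[OF n_ge_2])
  fix i j
  assume nz: "coeff2 (vg ^ K * monom2 e 0 (2*n+1-K)) i j \<noteq> 0"
  show "vanishing_monomial n i j"
  proof (cases "K = 1")
    case True
    then have j: "2*n \<le> j" and v: "coeff2 vg i (j - 2*n) \<noteq> 0"
      using nz by (auto simp: coeff2_mult_monom2 split: if_splits)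
    show ?thesis
      using coeff2_vg_nonzero[OF v] j n_ge_2 unfolding vanishing_monomial_def by auto
  next
    case False
    have "order_ge (K * 2 + (2*n+1-K)) (vg ^ K * monom2 e 0 (2*n+1-K))"
      by (intro worder_ge_mult worder_ge_power order_ge_2_vg worder_ge_monom2) simp
    moreover have "worder_ge 0 1 (0 + (2*n+1-K)) (vg ^ K * monom2 e 0 (2*n+1-K))"
      by (intro worder_ge_mult worder_ge_monom2) simp_all
    ultimately have "K * 2 + (2*n+1-K) \<le> i + j" "2*n+1-K \<le> j"
      using worder_ge_coeff2_nonzero[OF _ nz] by fastforce+
    then show ?thesis
      using K False n_ge_2 unfolding vanishing_monomial_def by arith
  qed
qed

lemma g_power_cong_A: "cong_A n (g ^ (2*n+1)) (monom2 (d ^ (2*n+1)) 0 (2*n+1))"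
proof -
  let ?u = "monom2 d 0 1" and ?m = "Suc (2*n)"
  define t where "t K = of_nat (?m choose K) * vg ^ K * ?u ^ (?m - K)" for K
  have "g ^ ?m = (vg + ?u) ^ ?m"
    by (simp add: vg_def)
  also have "\<dots> = (\<Sum>K\<le>?m. t K)"
    unfolding t_def by (rule binomial_ring)
  also have "\<dots> = t 0 + (\<Sum>K\<le>2*n. t (Suc K))"
    by (rule sum.atMost_Suc_shift)
  finally have g: "g ^ ?m = t 0 + (\<Sum>K\<le>2*n. t (Suc K))" .
  have t0: "t 0 = monom2 (d ^ ?m) 0 ?m"
    unfolding t_def by (simp only: monom2_power) simp
  have "(\<Sum>K\<le>2*n. t (Suc K)) \<in> I_n n"
  proof (rule I_n_sum)
    fix K assume "K \<in> {..2*n}"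
    then have "vg ^ Suc K * monom2 (d ^ (?m - Suc K)) 0 (2*n+1 - Suc K) \<in> I_n n"
      by (intro vg_power_mult_in_I_n) auto
    then show "t (Suc K) \<in> I_n n"
      using I_n_mult_left unfolding t_def by (simp add: monom2_power mult.assoc)
  qed
  then have "cong_A n (g ^ ?m) (monom2 (d ^ ?m) 0 ?m)"
    unfolding cong_A_def g t0 by simp
  then show ?thesis
    by simp
qed

lemma phi_y_power_cong_A: "cong_A n (\<phi> (var_y ^ (2*n+1))) (const2 (d ^ 3) * var_y ^ (2*n+1))"
proof -
  have "d ^ (2*n+1) = d ^ 3"
  proof -
    have "2*n+1 = 3 + (n-1)*2" using n_ge_2 by simp
    then show ?thesis by (simp only: power_add power_mult d_power_n_minus_1) simp
  qed
  have "cong_A n (\<phi> (var_y ^ (2*n+1))) (g ^ (2*n+1))"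
    unfolding g_def by (rule phi_power)
  also note g_power_cong_A
  also have "monom2 (d ^ (2*n+1)) 0 (2*n+1) = const2 (d ^ 3) * var_y ^ (2*n+1)"
    using \<open>d ^ (2*n+1) = d ^ 3\<close>
    by (simp only: const2_eq_monom2 var_y_power_eq_monom2 monom2_mult mult_1_right add_0)
  finally show ?thesis .
qed

end

theorem theorem1p1:
  fixes n :: nat and \<phi> :: "'a::field poly poly \<Rightarrow> 'a poly poly"
  assumes "n \<ge> 2"
    and "CHAR('a) = 0 \<or> (coprime (CHAR('a)) n \<and> coprime (CHAR('a)) (n - 1))"
    and "is_aut_A n \<phi>"
  shows "\<exists>\<gamma>::'a. cong_A n (\<phi> (var_y ^ (2*n+1))) (const2 \<gamma> * var_y ^ (2*n+1)) \<and>
           (if n mod 3 = 1 then \<gamma> ^ ((n - 1) div 3) = 1 else \<gamma> ^ (n - 1) = 1)"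
proof -
  interpret A_automorphism_nondeg n \<phi>
    using assms of_nat_n_times_pred_nonzero by unfold_locales auto
  show ?thesis
    using phi_y_power_cong_A d_cube_power_n_minus_1 d_cube_power_n_minus_1_div_3 by auto
qed

end
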